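(* Let $\mu$ be a monotone system over $\{0,1\}^V$, $\theta\in(0,1)$ and $T_2\ge1$. For $t\ge1$ define $P^{(t)}_{\mathrm{alg}}=P_{\mathrm{cl}}P_{\mathrm{s\text{-}GD}}$ and $P^{(t)}_{\pi\text{-mGD}}=P_{\mathrm{cl}}P_{\pi\text{-GD}}$ if $(t-1)\bmod T_2=0$, and $P^{(t)}_{\mathrm{alg}}=P_{\mathrm{s\text{-}GD}}$, $P^{(t)}_{\pi\text{-mGD}}=P_{\pi\text{-GD}}$ otherwise. Then $P^{(t)}_{\pi\text{-mGD}}\preceq_{\mathrm{mc}}P^{(t)}_{\mathrm{alg}}$ for all $t\ge1$.
   Context: Monotone system: for every $v$ and all feasible $\sigma\preceq\tau$ in $\{0,1\}^{V\setminus\{v\}}$ (coordinatewise), $\mu^\sigma_v(1)\le\mu^\tau_v(1)$. Tilted $(\theta*\mu)(\sigma)\propto\mu(\sigma)\theta^{\|\sigma\|_1}$. $\mathsf{lift}$: random map $\{0,1\}^V\to\{0,1,\star\}^V$, independently per coordinate $0\mapsto0$, $1\mapsto\star$ w.p. $1-\theta$, $1\mapsto1$ w.p. $\theta$. $\mathsf{contr}$: $0\mapsto0$, $1,\star\mapsto1$. $\pi$: law of $\mathsf{lift}(X)$, $X\sim\mu$, support $\Omega(\pi)$. $P_{\pi\text{-GD}}$: pick $v$ uniformly, resample $X_v$ from $\pi$ given $X_{V\setminus\{v\}}$. $P_{\mathrm{cl}}$: $X\mapsto\mathsf{lift}(\mathsf{contr}(X))$. $P_{\mathrm{s\text{-}GD}}$: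 pick $v$ uniformly; if $X_v=\star$ keep it; otherwise resample $X_v\in\{0,1\}$ from $(\theta*\mu)_v^{\sigma_{V\setminus\{v\}}}$, $\sigma=\mathsf{contr}(X)$. The product $PQ$ means apply $P$ then $Q$. Order $0<1<\star$, coordinatewise partial order. $f:\Omega(\pi)\to\mathbb R_{\ge0}$ is increasing if $X\preceq Y\Rightarrow f(X)\le f(Y)$; $\nu\preceq_{\mathrm{sd}}\nu'$ iff $\mathbb E_\nu f\le\mathbb E_{\nu'}f$ for all increasing $f$. $\mathcal{MC}_\pi$: chains reversible w.r.t. $\pi$ and stochastically monotone ($Pf$ increasing whenever $f$ is). For $P,Q\in\mathcal{MC}_\pi$, $P\preceq_{\mathrm{mc}}Q$ iff for every distribution $\nu$ on $\Omega(\pi)$ such that $\sigma\mapsto\nu(\sigma)/\pi(\sigma)$ is increasing, $\nu P\preceq_{\mathrm{sd}}\nu Q$. *)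

theory Defs
  imports Complex_Main
begin

datatype spin3 = Zero | One | Star

lemma UNIV_spin3: "(UNIV :: spin3 set) = {Zero, One, Star}"
  using spin3.exhaust by auto

instance spin3 :: finite
  by standard (simp add: UNIV_spin3)

fun rank3 :: "spin3 \<Rightarrow> nat" where
  "rank3 Zero = 0" | "rank3 One = 1" | "rank3 Star = 2"

definition conf_le :: "('v \<Rightarrow> spin3) \<Rightarrow> ('v \<Rightarrow> spin3) \<Rightarrow> bool" where
  "conf_le X Y \<longleftrightarrow> (\<forall>v. rank3 (X v) \<le> rank3 (Y v))"

text \<open>Configurations in {0,1}^V are 'v \<Rightarrow> bool (True = 1); a distribution is a
  function to the reals.\<close>

definition feasible :: "(('v \<Rightarrow> bool) \<Rightarrow> real) \<Rightarrow> 'v \<Rightarrow> ('v \<Rightarrow> bool) \<Rightarrow> bool" where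
  "feasible mu v \<sigma> \<longleftrightarrow> mu (\<sigma>(v := True)) + mu (\<sigma>(v := False)) > 0"

definition cond1 :: "(('v \<Rightarrow> bool) \<Rightarrow> real) \<Rightarrow> 'v \<Rightarrow> ('v \<Rightarrow> bool) \<Rightarrow> real" where
  "cond1 mu v \<sigma> = mu (\<sigma>(v := True)) / (mu (\<sigma>(v := True)) + mu (\<sigma>(v := False)))"

definition is_distr :: "('a::finite \<Rightarrow> real) \<Rightarrow> bool" where
  "is_distr mu \<longleftrightarrow> (\<forall>x. mu x \<ge> 0) \<and> (\<Sum>x\<in>UNIV. mu x) = 1"

definition monotone_system :: "(('v::finite \<Rightarrow> bool) \<Rightarrow> real) \<Rightarrow> bool" where
  "monotone_system mu \<longleftrightarrow> is_distr mu \<and>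
     (\<forall>v \<sigma> \<tau>. (\<forall>u. u \<noteq> v \<longrightarrow> (\<sigma> u \<longrightarrow> \<tau> u)) \<and> feasible mu v \<sigma> \<and> feasible mu v \<tau>
        \<longrightarrow> cond1 mu v \<sigma> \<le> cond1 mu v \<tau>)"

definition tilt :: "real \<Rightarrow> (('v::finite \<Rightarrow> bool) \<Rightarrow> real) \<Rightarrow> ('v \<Rightarrow> bool) \<Rightarrow> real" where
  "tilt \<theta> mu \<sigma> = mu \<sigma> * \<theta> ^ card {v. \<sigma> v} /
     (\<Sum>\<tau>\<in>UNIV. mu \<tau> * \<theta> ^ card {v. \<tau> v})"

definition contr :: "('v \<Rightarrow> spin3) \<Rightarrow> ('v \<Rightarrow> bool)" where
  "contr X = (\<lambda>v. X v \<noteq> Zero)"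

fun lift1 :: "real \<Rightarrow> bool \<Rightarrow> spin3 \<Rightarrow> real" where
  "lift1 \<theta> False c = (if c = Zero then 1 else 0)"
| "lift1 \<theta> True Zero = 0"
| "lift1 \<theta> True One = \<theta>"
| "lift1 \<theta> True Star = 1 - \<theta>"

definition lift_prob :: "real \<Rightarrow> ('v::finite \<Rightarrow> bool) \<Rightarrow> ('v \<Rightarrow> spin3) \<Rightarrow> real" where
  "lift_prob \<theta> \<sigma> X = (\<Prod>v\<in>UNIV. lift1 \<theta> (\<sigma> v) (X v))"

definition pi_lift :: "real \<Rightarrow> (('v::finite \<Rightarrow> bool) \<Rightarrow> real) \<Rightarrow> ('v \<Rightarrow> spin3) \<Rightarrow> real" where
  "pi_lift \<theta> mu X = (\<Sum>\<sigma>\<in>UNIV. mu \<sigma> * lift_prob \<theta> \<sigma> X)"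

definition Omega :: "(('v \<Rightarrow> spin3) \<Rightarrow> real) \<Rightarrow> ('v \<Rightarrow> spin3) set" where
  "Omega p = {X. p X > 0}"

type_synonym 'v chain = "('v \<Rightarrow> spin3) \<Rightarrow> ('v \<Rightarrow> spin3) \<Rightarrow> real"

definition mprod :: "'v::finite chain \<Rightarrow> 'v chain \<Rightarrow> 'v chain" where
  "mprod P Q X Z = (\<Sum>Y\<in>UNIV. P X Y * Q Y Z)"

definition P_piGD :: "real \<Rightarrow> (('v::finite \<Rightarrow> bool) \<Rightarrow> real) \<Rightarrow> 'v chain" where
  "P_piGD \<theta> mu X Y = (1 / real (card (UNIV :: 'v set))) *
     (\<Sum>v\<in>UNIV. if (\<forall>u. u \<noteq> v \<longrightarrow> Y u = X u)
        then pi_lift \<theta> mu Y / (\<Sum>c\<in>UNIV. pi_lift \<theta> mu (X(v := c))) else 0)"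

definition P_cl :: "real \<Rightarrow> 'v::finite chain" where
  "P_cl \<theta> X Y = lift_prob \<theta> (contr X) Y"

definition P_sGD :: "real \<Rightarrow> (('v::finite \<Rightarrow> bool) \<Rightarrow> real) \<Rightarrow> 'v chain" where
  "P_sGD \<theta> mu X Y = (1 / real (card (UNIV :: 'v set))) *
     (\<Sum>v\<in>UNIV. if X v = Star then (if Y = X then 1 else 0)
        else (let q = cond1 (tilt \<theta> mu) v (contr X) in
              (if Y = X(v := One) then q else 0) + (if Y = X(v := Zero) then 1 - q else 0)))"

definition P_alg :: "real \<Rightarrow> (('v::finite \<Rightarrow> bool) \<Rightarrow> real) \<Rightarrow> nat \<Rightarrow> nat \<Rightarrow> 'v chain" where
  "P_alg \<theta> mu T2 t = (if (t - 1) mod T2 = 0 then mprod (P_cl \<theta>) (P_sGD \<theta> mu) else P_sGD \<theta> mu)"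

definition P_pimGD :: "real \<Rightarrow> (('v::finite \<Rightarrow> bool) \<Rightarrow> real) \<Rightarrow> nat \<Rightarrow> nat \<Rightarrow> 'v chain" where
  "P_pimGD \<theta> mu T2 t = (if (t - 1) mod T2 = 0 then mprod (P_cl \<theta>) (P_piGD \<theta> mu) else P_piGD \<theta> mu)"

definition increasing_on :: "('v \<Rightarrow> spin3) set \<Rightarrow> (('v \<Rightarrow> spin3) \<Rightarrow> real) \<Rightarrow> bool" where
  "increasing_on S f \<longleftrightarrow> (\<forall>X\<in>S. f X \<ge> 0) \<and>
     (\<forall>X\<in>S. \<forall>Y\<in>S. conf_le X Y \<longrightarrow> f X \<le> f Y)"

definition sd_le :: "('v \<Rightarrow> spin3) set \<Rightarrow> (('v \<Rightarrow> spin3) \<Rightarrow> real) \<Rightarrow> (('v \<Rightarrow> spin3) \<Rightarrow> real) \<Rightarrow> bool" where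
  "sd_le S \<nu> \<nu>' \<longleftrightarrow> (\<forall>f. increasing_on S f \<longrightarrow> (\<Sum>Y\<in>S. \<nu> Y * f Y) \<le> (\<Sum>Y\<in>S. \<nu>' Y * f Y))"

definition push :: "(('v::finite \<Rightarrow> spin3) \<Rightarrow> real) \<Rightarrow> 'v chain \<Rightarrow> ('v \<Rightarrow> spin3) \<Rightarrow> real" where
  "push \<nu> P Y = (\<Sum>X\<in>UNIV. \<nu> X * P X Y)"

definition distr_on :: "('v \<Rightarrow> spin3) set \<Rightarrow> (('v \<Rightarrow> spin3) \<Rightarrow> real) \<Rightarrow> bool" where
  "distr_on S \<nu> \<longleftrightarrow> (\<forall>X. \<nu> X \<ge> 0) \<and> (\<forall>X. X \<notin> S \<longrightarrow> \<nu> X = 0) \<and> (\<Sum>X\<in>S. \<nu> X) = 1"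

definition mc_le :: "(('v::finite \<Rightarrow> spin3) \<Rightarrow> real) \<Rightarrow> 'v chain \<Rightarrow> 'v chain \<Rightarrow> bool" where
  "mc_le p P Q \<longleftrightarrow> (\<forall>\<nu>. distr_on (Omega p) \<nu> \<and> increasing_on (Omega p) (\<lambda>X. \<nu> X / p X)
      \<longrightarrow> sd_le (Omega p) (push \<nu> P) (push \<nu> Q))"

end

theory Submission
  imports Defs "HOL-Library.FuncSet"
begin

text \<open>Whenever a round applies \<open>P_cl\<close> first, both chains do, so two facts suffice.
  (a) \<open>P_cl\<close> is reversible w.r.t. \<open>\<pi>\<close>, so the density \<open>(\<nu> P_cl) / \<pi>\<close> at \<open>Y\<close> is the mean of
  an increasing extension of \<open>\<nu> / \<pi>\<close> under \<open>lift (contr Y)\<close>; since lift is coordinatewise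
  monotone, an increasing density stays increasing.
  (b) Both Glauber dynamics update a uniformly chosen site \<open>v\<close>. On the fibre \<open>X(v := c)\<close> with
  \<open>\<pi>\<close>-weights \<open>p0, p1, ps\<close> the tilted conditional of s-GD equals \<open>p1 / (p0 + p1)\<close>, and the
  gain of s-GD over \<open>\<pi>\<close>-GD in the expectation of an increasing \<open>f\<close> is
  \<open>ps (s gs - A) (s Fs - B) / (s (s + ps))\<close>, where \<open>s = p0 + p1\<close> and \<open>A\<close>, \<open>B\<close> are the
  \<open>p\<close>-weighted sums of the density \<open>g\<close> and of \<open>f\<close> over the spins 0 and 1. Both factors are
  nonnegative because \<open>g\<close> and \<open>f\<close> are increasing in the spin at \<open>v\<close>.\<close>

lemma lift1_nonneg: "0 \<le> \<theta> \<Longrightarrow> \<theta> \<le> 1 \<Longrightarrow> 0 \<le> lift1 \<theta> b c"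
  by (cases b; cases c) auto

lemma lift1_contr_pos: "0 < \<theta> \<Longrightarrow> \<theta> < 1 \<Longrightarrow> 0 < lift1 \<theta> (c \<noteq> Zero) c"
  by (cases c) auto

lemma lift1_eq_0: "b \<noteq> (c \<noteq> Zero) \<Longrightarrow> lift1 \<theta> b c = 0"
  by (cases b; cases c) auto

lemma sum_lift1: "(\<Sum>c\<in>UNIV. lift1 \<theta> b c) = 1"
  by (cases b) (auto simp: UNIV_spin3)

lemma lift_prob_nonneg: "0 \<le> \<theta> \<Longrightarrow> \<theta> \<le> 1 \<Longrightarrow> 0 \<le> lift_prob \<theta> \<sigma> X"
  unfolding lift_prob_def by (intro prod_nonneg) (auto intro: lift1_nonneg)

lemma lift_prob_eq_0:
  assumes "\<sigma> \<noteq> contr X"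
  shows "lift_prob \<theta> \<sigma> X = 0"
proof -
  from assms obtain v where "\<sigma> v \<noteq> (X v \<noteq> Zero)"
    unfolding contr_def by auto
  then have "lift1 \<theta> (\<sigma> v) (X v) = 0"
    by (rule lift1_eq_0)
  then show ?thesis
    unfolding lift_prob_def by (intro prod_zero) auto
qed

lemma sum_lift_prob: "(\<Sum>X\<in>UNIV. lift_prob \<theta> \<sigma> X) = 1"
proof -
  have "(\<Prod>v\<in>UNIV. \<Sum>c\<in>UNIV. lift1 \<theta> (\<sigma> v) c) =
      (\<Sum>X\<in>PiE UNIV (\<lambda>_. UNIV). \<Prod>v\<in>UNIV. lift1 \<theta> (\<sigma> v) (X v))"
    by (rule prod_sum_PiE) auto
  then show ?thesis
    unfolding lift_prob_def by (simp add: sum_lift1)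
qed

lemma lift_prob_fun_upd:
  "lift_prob \<theta> \<sigma> (X(v := c)) = lift1 \<theta> (\<sigma> v) c * (\<Prod>u\<in>UNIV-{v}. lift1 \<theta> (\<sigma> u) (X u))"
  unfolding lift_prob_def by (subst prod.remove[of _ v]) (auto intro!: prod.cong)

lemma contr_fun_upd: "contr (X(v := c)) = (contr X)(v := (c \<noteq> Zero))"
  unfolding contr_def by auto

lemma conf_le_refl: "conf_le X X"
  unfolding conf_le_def by simp

lemma conf_le_trans: "conf_le X Y \<Longrightarrow> conf_le Y Z \<Longrightarrow> conf_le X Z"
  unfolding conf_le_def using order_trans by blast

lemma conf_le_fun_upd: "rank3 c \<le> rank3 d \<Longrightarrow> conf_le (X(v := c)) (X(v := d))"
  unfolding conf_le_def by auto

lemma increasing_onD: "increasing_on S f \<Longrightarrow> X \<in> S \<Longrightarrow> Y \<in> S \<Longrightarrow> conf_le X Y \<Longrightarrow> f X \<le> f Y"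
  unfolding increasing_on_def by blast

lemma contr_mono:
  assumes "conf_le X Y" "contr X u"
  shows "contr Y u"
proof -
  have "rank3 (X u) \<le> rank3 (Y u)"
    using assms(1) unfolding conf_le_def by blast
  with assms(2) show ?thesis
    unfolding contr_def by (cases "X u"; cases "Y u") auto
qed

lemma pi_lift_eq: "pi_lift \<theta> mu X = mu (contr X) * lift_prob \<theta> (contr X) X"
  unfolding pi_lift_def by (subst sum.remove[of _ "contr X"]) (auto simp: lift_prob_eq_0)

lemma pi_lift_nonneg: "is_distr mu \<Longrightarrow> 0 \<le> \<theta> \<Longrightarrow> \<theta> \<le> 1 \<Longrightarrow> 0 \<le> pi_lift \<theta> mu X"
  unfolding pi_lift_eq is_distr_def by (auto intro!: mult_nonneg_nonneg lift_prob_nonneg)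

lemma pi_lift_fun_upd:
  fixes X :: "'v::finite \<Rightarrow> spin3" and v :: 'v and \<theta> :: real
  defines "L \<equiv> \<Prod>u\<in>UNIV-{v}. lift1 \<theta> (contr X u) (X u)"
  shows "pi_lift \<theta> mu (X(v := Zero)) = mu ((contr X)(v := False)) * L"
    and "pi_lift \<theta> mu (X(v := One)) = mu ((contr X)(v := True)) * \<theta> * L"
    and "pi_lift \<theta> mu (X(v := Star)) = mu ((contr X)(v := True)) * (1 - \<theta>) * L"
  unfolding L_def pi_lift_eq contr_fun_upd lift_prob_fun_upd
  by (auto intro!: prod.cong simp: contr_def)

lemma pi_lift_fun_upd_factor_pos:
  "0 < \<theta> \<Longrightarrow> \<theta> < 1 \<Longrightarrow> 0 < (\<Prod>u\<in>UNIV-{v}. lift1 \<theta> (contr X u) (X u))"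
  unfolding contr_def by (intro prod_pos) (auto intro: lift1_contr_pos)

lemma tilt_normaliser_pos:
  assumes "is_distr mu" "0 < \<theta>"
  shows "0 < (\<Sum>\<tau>\<in>UNIV. mu \<tau> * \<theta> ^ card {v. \<tau> v})"
proof -
  have mu_nonneg: "0 \<le> mu \<tau>" for \<tau>
    using assms(1) unfolding is_distr_def by blast
  obtain \<tau> where "mu \<tau> \<noteq> 0"
    using assms(1) unfolding is_distr_def by (metis sum.neutral zero_neq_one)
  then have "0 < mu \<tau> * \<theta> ^ card {v. \<tau> v}"
    using mu_nonneg[of \<tau>] assms(2) by simp
  also have "\<dots> \<le> (\<Sum>\<tau>\<in>UNIV. mu \<tau> * \<theta> ^ card {v. \<tau> v})"
    by (rule member_le_sum) (use mu_nonneg assms(2) in auto)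
  finally show ?thesis .
qed

lemma cond1_tilt:
  assumes "is_distr mu" "0 < \<theta>"
  shows "cond1 (tilt \<theta> mu) v \<sigma> =
    \<theta> * mu (\<sigma>(v := True)) / (\<theta> * mu (\<sigma>(v := True)) + mu (\<sigma>(v := False)))"
proof -
  define Z where "Z = (\<Sum>\<tau>\<in>UNIV. mu \<tau> * \<theta> ^ card {v. \<tau> v})"
  define k where "k = card {u. (\<sigma>(v := False)) u}"
  have "{u. (\<sigma>(v := True)) u} = insert v {u. (\<sigma>(v := False)) u}"
    by auto
  then have card_True: "card {u. (\<sigma>(v := True)) u} = Suc k"
    unfolding k_def by (simp only:) (rule card_insert_disjoint; simp)
  have "cond1 (tilt \<theta> mu) v \<sigma> = \<theta> ^ k / Z * (\<theta> * mu (\<sigma>(v := True))) /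
      (\<theta> ^ k / Z * (\<theta> * mu (\<sigma>(v := True)) + mu (\<sigma>(v := False))))"
    unfolding cond1_def tilt_def card_True Z_def[symmetric] k_def[symmetric]
    by (simp add: algebra_simps)
  also have "\<dots> = \<theta> * mu (\<sigma>(v := True)) / (\<theta> * mu (\<sigma>(v := True)) + mu (\<sigma>(v := False)))"
    using tilt_normaliser_pos[OF assms] assms(2) unfolding Z_def
    by (intro mult_divide_mult_cancel_left) simp
  finally show ?thesis .
qed

lemma cond1_tilt_eq_pi_lift:
  assumes "is_distr mu" "0 < \<theta>" "\<theta> < 1"
  shows "cond1 (tilt \<theta> mu) v (contr X) =
    pi_lift \<theta> mu (X(v := One)) / (pi_lift \<theta> mu (X(v := Zero)) + pi_lift \<theta> mu (X(v := One)))"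
proof -
  define L where "L = (\<Prod>u\<in>UNIV-{v}. lift1 \<theta> (contr X u) (X u))"
  define a where "a = mu ((contr X)(v := False))"
  define b where "b = mu ((contr X)(v := True))"
  have "L \<noteq> 0"
    using pi_lift_fun_upd_factor_pos[OF assms(2,3)] unfolding L_def by (metis less_irrefl)
  then have "\<theta> * b / (\<theta> * b + a) = L * (\<theta> * b) / (L * (\<theta> * b + a))"
    by (rule mult_divide_mult_cancel_left[symmetric])
  then show ?thesis
    unfolding cond1_tilt[OF assms(1,2)] pi_lift_fun_upd L_def[symmetric] a_def[symmetric]
      b_def[symmetric]
    by (simp add: algebra_simps)
qed

lemma sum_fun_upd_fibres:
  fixes h :: "('a::finite \<Rightarrow> 'b::finite) \<Rightarrow> 'c::comm_monoid_add"
  shows "(\<Sum>X\<in>UNIV. h X) = (\<Sum>X\<in>{X. X v = b}. \<Sum>c\<in>UNIV. h (X(v := c)))"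
proof -
  have "(\<Sum>X\<in>UNIV. h X) = (\<Sum>c\<in>UNIV. \<Sum>X\<in>{X\<in>UNIV. X v = c}. h X)"
    by (rule sum.group[symmetric]) auto
  also have "\<dots> = (\<Sum>c\<in>UNIV. \<Sum>X\<in>{X. X v = b}. h (X(v := c)))"
  proof (rule sum.cong[OF refl])
    fix c
    show "(\<Sum>X\<in>{X\<in>UNIV. X v = c}. h X) = (\<Sum>X\<in>{X. X v = b}. h (X(v := c)))"
      by (rule sum.reindex_bij_witness[where j="\<lambda>Y. Y(v := b)" and i="\<lambda>X. X(v := c)"]) auto
  qed
  also have "\<dots> = (\<Sum>X\<in>{X. X v = b}. \<Sum>c\<in>UNIV. h (X(v := c)))"
    by (rule sum.swap)
  finally show ?thesis .
qed

lemma sum_if_eq_off: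
  fixes h :: "('a::finite \<Rightarrow> 'b::finite) \<Rightarrow> 'c::comm_monoid_add"
  shows "(\<Sum>Y\<in>UNIV. if (\<forall>u. u \<noteq> v \<longrightarrow> Y u = X u) then h Y else 0) = (\<Sum>c\<in>UNIV. h (X(v := c)))"
proof -
  have "{Y. \<forall>u. u \<noteq> v \<longrightarrow> Y u = X u} = range (\<lambda>c. X(v := c))"
    by (auto intro!: image_eqI[where x="_ v"])
  moreover have "inj (\<lambda>c. X(v := c))"
    by (rule injI) (metis fun_upd_same)
  ultimately have "(\<Sum>Y\<in>{Y. \<forall>u. u \<noteq> v \<longrightarrow> Y u = X u}. h Y) = (\<Sum>c\<in>UNIV. h (X(v := c)))"
    by (simp add: sum.reindex)
  then show ?thesis
    by (simp add: sum.If_cases)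
qed

lemma sum_if_eq_mult:
  "(\<Sum>Y\<in>UNIV. (if Y = (A::'a::finite) then q else 0) * F Y) = q * (F A :: 'b::semiring_0)"
  by (simp add: if_distrib[of "\<lambda>x. x * _"] cong: if_cong)

lemma sum_scaled_sum_mult:
  fixes c :: "'a::comm_semiring_0"
  shows "(\<Sum>Y\<in>A. c * (\<Sum>v\<in>B. K v Y) * F Y) = c * (\<Sum>v\<in>B. \<Sum>Y\<in>A. K v Y * F Y)"
  by (simp add: sum_distrib_left sum_distrib_right mult.assoc) (rule sum.swap)

lemma mixing_ineq:
  fixes s ps A B gs Fs :: real
  assumes "0 < s" "0 \<le> ps" "A \<le> s * gs" "B \<le> s * Fs"
  shows "(A + gs * ps) * (B + ps * Fs) / (s + ps) \<le> gs * ps * Fs + A * B / s"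
proof -
  have "gs * ps * Fs + A * B / s - (A + gs * ps) * (B + ps * Fs) / (s + ps) =
      ps * (s * gs - A) * (s * Fs - B) / (s * (s + ps))"
    using assms(1,2) by (simp add: field_simps)
  also have "\<dots> \<ge> 0"
    using assms by (intro divide_nonneg_pos mult_nonneg_nonneg) auto
  finally show ?thesis
    by simp
qed

lemma three_point_comparison:
  fixes p0 p1 ps g0 g1 gs F0 F1 Fs :: real
  assumes p_nonneg: "0 \<le> p0" "0 \<le> p1" "0 \<le> ps" and star_iff_one: "0 < ps \<longleftrightarrow> 0 < p1"
    and g_mono: "0 < ps \<Longrightarrow> g1 \<le> gs" "0 < p0 \<Longrightarrow> 0 < p1 \<Longrightarrow> g0 \<le> g1"
    and F_mono: "0 < ps \<Longrightarrow> F1 \<le> Fs" "0 < p0 \<Longrightarrow> 0 < p1 \<Longrightarrow> F0 \<le> F1"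
  shows "(g0 * p0 + g1 * p1 + gs * ps) * ((p0 * F0 + p1 * F1 + ps * Fs) / (p0 + p1 + ps))
    \<le> gs * ps * Fs + (g0 * p0 + g1 * p1) * (p1 / (p0 + p1) * F1 + (1 - p1 / (p0 + p1)) * F0)"
proof (cases "0 < ps")
  case False
  then have "ps = 0" "p1 = 0"
    using p_nonneg star_iff_one by auto
  then show ?thesis
    by (cases "p0 = 0") auto
next
  case True
  then have "0 < p1"
    using star_iff_one by simp
  then have s_pos: "0 < p0 + p1"
    using p_nonneg(1) by simp
  have "p0 * g0 \<le> p0 * gs" "p0 * F0 \<le> p0 * Fs"
    using p_nonneg(1) \<open>0 < p1\<close> True g_mono F_mono
    by (cases "p0 = 0"; force intro: mult_left_mono)+
  moreover have "p1 * g1 \<le> p1 * gs" "p1 * F1 \<le> p1 * Fs"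
    using p_nonneg(2) True g_mono F_mono by (auto intro: mult_left_mono)
  ultimately have A: "g0 * p0 + g1 * p1 \<le> (p0 + p1) * gs"
    and B: "p0 * F0 + p1 * F1 \<le> (p0 + p1) * Fs"
    by (simp_all add: algebra_simps)
  have one_minus: "1 - p1 / (p0 + p1) = p0 / (p0 + p1)"
    using s_pos by (simp add: field_simps)
  have "p1 / (p0 + p1) * F1 + (1 - p1 / (p0 + p1)) * F0 = (p0 * F0 + p1 * F1) / (p0 + p1)"
    unfolding one_minus by (simp add: add_divide_distrib algebra_simps)
  then show ?thesis
    using mixing_ineq[OF s_pos p_nonneg(3) A B] by simp
qed

definition piGD_site_mean ::
    "real \<Rightarrow> (('v::finite \<Rightarrow> bool) \<Rightarrow> real) \<Rightarrow> (('v \<Rightarrow> spin3) \<Rightarrow> real) \<Rightarrow> 'v \<Rightarrow> ('v \<Rightarrow> spin3) \<Rightarrow> real"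
  where "piGD_site_mean \<theta> mu F v X =
    (\<Sum>c\<in>UNIV. pi_lift \<theta> mu (X(v := c)) * F (X(v := c))) / (\<Sum>c\<in>UNIV. pi_lift \<theta> mu (X(v := c)))"

definition sGD_site_mean ::
    "real \<Rightarrow> (('v::finite \<Rightarrow> bool) \<Rightarrow> real) \<Rightarrow> (('v \<Rightarrow> spin3) \<Rightarrow> real) \<Rightarrow> 'v \<Rightarrow> ('v \<Rightarrow> spin3) \<Rightarrow> real"
  where "sGD_site_mean \<theta> mu F v X =
    (if X v = Star then F X
     else let q = cond1 (tilt \<theta> mu) v (contr X) in q * F (X(v := One)) + (1 - q) * F (X(v := Zero)))"

lemma sum_P_piGD_mult:
  fixes X :: "'v::finite \<Rightarrow> spin3"
  shows "(\<Sum>Y\<in>UNIV. P_piGD \<theta> mu X Y * F Y) =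
    1 / real (card (UNIV :: 'v set)) * (\<Sum>v\<in>UNIV. piGD_site_mean \<theta> mu F v X)"
proof -
  have site: "(\<Sum>Y\<in>UNIV. (if \<forall>u. u \<noteq> v \<longrightarrow> Y u = X u then pi_lift \<theta> mu Y / Z else 0) * F Y) =
      piGD_site_mean \<theta> mu F v X"
    if "Z = (\<Sum>c\<in>UNIV. pi_lift \<theta> mu (X(v := c)))" for v Z
  proof -
    have "(\<Sum>Y\<in>UNIV. (if \<forall>u. u \<noteq> v \<longrightarrow> Y u = X u then pi_lift \<theta> mu Y / Z else 0) * F Y) =
        (\<Sum>Y\<in>UNIV. if \<forall>u. u \<noteq> v \<longrightarrow> Y u = X u then pi_lift \<theta> mu Y * F Y / Z else 0)"
      by (rule sum.cong) auto
    then show ?thesis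
      unfolding sum_if_eq_off piGD_site_mean_def that by (simp add: sum_divide_distrib)
  qed
  show ?thesis
    unfolding P_piGD_def sum_scaled_sum_mult by (simp add: site)
qed

lemma sum_P_sGD_mult:
  fixes X :: "'v::finite \<Rightarrow> spin3"
  shows "(\<Sum>Y\<in>UNIV. P_sGD \<theta> mu X Y * F Y) =
    1 / real (card (UNIV :: 'v set)) * (\<Sum>v\<in>UNIV. sGD_site_mean \<theta> mu F v X)"
proof -
  have "(\<Sum>Y\<in>UNIV. (if X v = Star then if Y = X then 1 else 0
        else let q = cond1 (tilt \<theta> mu) v (contr X)
          in (if Y = X(v := One) then q else 0) + (if Y = X(v := Zero) then 1 - q else 0)) * F Y) =
      sGD_site_mean \<theta> mu F v X" for v
    by (simp add: sGD_site_mean_def Let_def distrib_right sum.distrib sum_if_eq_mult)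
  then show ?thesis
    unfolding P_sGD_def sum_scaled_sum_mult by simp
qed

definition has_increasing_density :: "(('v \<Rightarrow> spin3) \<Rightarrow> real) \<Rightarrow> (('v \<Rightarrow> spin3) \<Rightarrow> real) \<Rightarrow> bool"
  where "has_increasing_density p \<nu> \<longleftrightarrow>
    distr_on (Omega p) \<nu> \<and> increasing_on (Omega p) (\<lambda>X. \<nu> X / p X)"

lemma site_means_fibre_le:
  fixes X :: "'v::finite \<Rightarrow> spin3"
  assumes mu: "is_distr mu" and \<theta>: "0 < \<theta>" "\<theta> < 1"
    and \<nu>: "has_increasing_density (pi_lift \<theta> mu) \<nu>"
    and F: "increasing_on (Omega (pi_lift \<theta> mu)) F"
  shows "(\<Sum>c\<in>UNIV. \<nu> (X(v := c)) * piGD_site_mean \<theta> mu F v (X(v := c)))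
    \<le> (\<Sum>c\<in>UNIV. \<nu> (X(v := c)) * sGD_site_mean \<theta> mu F v (X(v := c)))"
proof -
  define p where "p = pi_lift \<theta> mu"
  define p0 p1 ps where "p0 = p (X(v := Zero))" and "p1 = p (X(v := One))"
    and "ps = p (X(v := Star))"
  define g0 g1 gs where "g0 = \<nu> (X(v := Zero)) / p0" and "g1 = \<nu> (X(v := One)) / p1"
    and "gs = \<nu> (X(v := Star)) / ps"
  define F0 F1 Fs where "F0 = F (X(v := Zero))" and "F1 = F (X(v := One))"
    and "Fs = F (X(v := Star))"
  have p_nonneg: "0 \<le> p Y" for Y
    unfolding p_def using pi_lift_nonneg[OF mu] \<theta> by simp
  have \<nu>_eq: "\<nu> Y = \<nu> Y / p Y * p Y" for Y
  proof (cases "p Y = 0")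
    case True
    then have "Y \<notin> Omega p"
      unfolding Omega_def by simp
    then show ?thesis
      using \<nu> unfolding has_increasing_density_def distr_on_def p_def by simp
  qed simp
  have in_Omega: "0 < p Y \<Longrightarrow> Y \<in> Omega p" for Y
    unfolding Omega_def by simp
  have g_mono: "\<nu> Y / p Y \<le> \<nu> Y' / p Y'" if "0 < p Y" "0 < p Y'" "conf_le Y Y'" for Y Y'
    using \<nu> that in_Omega unfolding has_increasing_density_def p_def by (blast dest: increasing_onD)
  have F_mono: "F Y \<le> F Y'" if "0 < p Y" "0 < p Y'" "conf_le Y Y'" for Y Y'
    using F that in_Omega unfolding p_def by (blast dest: increasing_onD)
  have star_iff_one: "0 < ps \<longleftrightarrow> 0 < p1"
    using pi_lift_fun_upd_factor_pos[OF \<theta>, where v=v and X=X] \<theta> mu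
    unfolding ps_def p1_def p_def pi_lift_fun_upd is_distr_def
    by (auto simp: zero_less_mult_iff)
  define M where "M = p1 / (p0 + p1) * F1 + (1 - p1 / (p0 + p1)) * F0"
  have "cond1 (tilt \<theta> mu) v (contr (X(v := c))) = p1 / (p0 + p1)" for c
    using cond1_tilt_eq_pi_lift[OF mu \<theta>, of v "X(v := c)"] unfolding p0_def p1_def p_def by simp
  then have sGD: "sGD_site_mean \<theta> mu F v (X(v := c)) = (if c = Star then Fs else M)" for c
    unfolding sGD_site_mean_def M_def F0_def F1_def Fs_def by simp
  have piGD: "piGD_site_mean \<theta> mu F v (X(v := c)) = (p0 * F0 + p1 * F1 + ps * Fs) / (p0 + p1 + ps)"
    for c
    unfolding piGD_site_mean_def p0_def p1_def ps_def F0_def F1_def Fs_def p_def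
    by (simp add: UNIV_spin3 add.assoc)
  have "(g0 * p0 + g1 * p1 + gs * ps) * ((p0 * F0 + p1 * F1 + ps * Fs) / (p0 + p1 + ps))
    \<le> gs * ps * Fs + (g0 * p0 + g1 * p1) * (p1 / (p0 + p1) * F1 + (1 - p1 / (p0 + p1)) * F0)"
  proof (rule three_point_comparison)
    show "0 \<le> p0" "0 \<le> p1" "0 \<le> ps"
      unfolding p0_def p1_def ps_def by (rule p_nonneg)+
    show "0 < ps \<longleftrightarrow> 0 < p1"
      by (rule star_iff_one)
    have upd_le: "conf_le (X(v := Zero)) (X(v := One))" "conf_le (X(v := One)) (X(v := Star))"
      by (simp_all add: conf_le_fun_upd)
    show "g1 \<le> gs" "F1 \<le> Fs" if "0 < ps"
      using that upd_le(2) g_mono F_mono star_iff_one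
      unfolding g1_def gs_def F1_def Fs_def p1_def ps_def by auto
    show "g0 \<le> g1" "F0 \<le> F1" if "0 < p0" "0 < p1"
      using that upd_le(1) g_mono F_mono
      unfolding g0_def g1_def F0_def F1_def p0_def p1_def by auto
  qed
  moreover have \<nu>_fibre: "\<nu> (X(v := Zero)) = g0 * p0" "\<nu> (X(v := One)) = g1 * p1"
    "\<nu> (X(v := Star)) = gs * ps"
    unfolding g0_def g1_def gs_def p0_def p1_def ps_def by (rule \<nu>_eq)+
  then have "(\<Sum>c\<in>UNIV. \<nu> (X(v := c)) * piGD_site_mean \<theta> mu F v (X(v := c))) =
      (g0 * p0 + g1 * p1 + gs * ps) * ((p0 * F0 + p1 * F1 + ps * Fs) / (p0 + p1 + ps))"
    unfolding piGD by (simp add: UNIV_spin3 distrib_right add_divide_distrib)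
  moreover have "(\<Sum>c\<in>UNIV. \<nu> (X(v := c)) * sGD_site_mean \<theta> mu F v (X(v := c))) =
      gs * ps * Fs + (g0 * p0 + g1 * p1) * M"
    unfolding sGD using \<nu>_fibre by (simp add: UNIV_spin3 algebra_simps)
  ultimately show ?thesis
    unfolding M_def by simp
qed

lemma sum_push_mult:
  fixes \<nu> :: "('v::finite \<Rightarrow> spin3) \<Rightarrow> real"
  shows "(\<Sum>Y\<in>S. push \<nu> P Y * f Y) =
    (\<Sum>X\<in>UNIV. \<nu> X * (\<Sum>Y\<in>UNIV. P X Y * (if Y \<in> S then f Y else 0)))"
proof -
  have "(\<Sum>Y\<in>S. push \<nu> P Y * f Y) = (\<Sum>Y\<in>UNIV. push \<nu> P Y * (if Y \<in> S then f Y else 0))"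
    by (simp add: sum.If_cases if_distrib[of "\<lambda>x. _ * x"] cong: if_cong)
  also have "\<dots> = (\<Sum>X\<in>UNIV. \<nu> X * (\<Sum>Y\<in>UNIV. P X Y * (if Y \<in> S then f Y else 0)))"
    unfolding push_def
    by (simp add: sum_distrib_left sum_distrib_right mult.assoc) (rule sum.swap)
  finally show ?thesis .
qed

lemma sd_le_push_piGD_sGD:
  fixes mu :: "('v::finite \<Rightarrow> bool) \<Rightarrow> real"
  assumes mu: "is_distr mu" and \<theta>: "0 < \<theta>" "\<theta> < 1"
    and \<nu>: "has_increasing_density (pi_lift \<theta> mu) \<nu>"
  shows "sd_le (Omega (pi_lift \<theta> mu)) (push \<nu> (P_piGD \<theta> mu)) (push \<nu> (P_sGD \<theta> mu))"
  unfolding sd_le_def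
proof (intro allI impI)
  fix f
  assume f: "increasing_on (Omega (pi_lift \<theta> mu)) f"
  define F where "F Y = (if Y \<in> Omega (pi_lift \<theta> mu) then f Y else 0)" for Y
  define c where "c = 1 / real (card (UNIV :: 'v set))"
  have "increasing_on (Omega (pi_lift \<theta> mu)) F"
    using f unfolding increasing_on_def F_def by simp
  then have site: "(\<Sum>X\<in>UNIV. \<nu> X * piGD_site_mean \<theta> mu F v X)
      \<le> (\<Sum>X\<in>UNIV. \<nu> X * sGD_site_mean \<theta> mu F v X)" for v
    by (subst (1 2) sum_fun_upd_fibres[where v=v and b=Zero])
      (intro sum_mono site_means_fibre_le[OF mu \<theta> \<nu>])
  have "(\<Sum>Y\<in>Omega (pi_lift \<theta> mu). push \<nu> (P_piGD \<theta> mu) Y * f Y) =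
      c * (\<Sum>v\<in>UNIV. \<Sum>X\<in>UNIV. \<nu> X * piGD_site_mean \<theta> mu F v X)"
    unfolding sum_push_mult F_def[symmetric] sum_P_piGD_mult c_def[symmetric]
    by (subst sum.swap) (simp add: sum_distrib_left mult.left_commute)
  also have "\<dots> \<le> c * (\<Sum>v\<in>UNIV. \<Sum>X\<in>UNIV. \<nu> X * sGD_site_mean \<theta> mu F v X)"
    unfolding c_def by (intro mult_left_mono sum_mono site) simp
  also have "\<dots> = (\<Sum>Y\<in>Omega (pi_lift \<theta> mu). push \<nu> (P_sGD \<theta> mu) Y * f Y)"
    unfolding sum_push_mult F_def[symmetric] sum_P_sGD_mult c_def[symmetric]
    by (subst sum.swap) (simp add: sum_distrib_left mult.left_commute)
  finally show "(\<Sum>Y\<in>Omega (pi_lift \<theta> mu). push \<nu> (P_piGD \<theta> mu) Y * f Y)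
      \<le> (\<Sum>Y\<in>Omega (pi_lift \<theta> mu). push \<nu> (P_sGD \<theta> mu) Y * f Y)" .
qed

definition mono_extension :: "('v \<Rightarrow> spin3) set \<Rightarrow> (('v::finite \<Rightarrow> spin3) \<Rightarrow> real) \<Rightarrow> ('v \<Rightarrow> spin3) \<Rightarrow> real"
  where "mono_extension S g X = Max (insert 0 (g ` {Y \<in> S. conf_le Y X}))"

lemma mono_extension_nonneg: "0 \<le> mono_extension S g X"
  unfolding mono_extension_def by (rule Max_ge) auto

lemma mono_extension_mono: "conf_le X X' \<Longrightarrow> mono_extension S g X \<le> mono_extension S g X'"
  unfolding mono_extension_def by (rule Max_mono) (auto intro: conf_le_trans)

lemma mono_extension_eq:
  assumes "increasing_on S g" "X \<in> S"
  shows "mono_extension S g X = g X"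
  unfolding mono_extension_def
proof (rule Max_eqI)
  show "g X \<in> insert 0 (g ` {Y \<in> S. conf_le Y X})"
    using assms(2) conf_le_refl by auto
next
  fix y
  assume "y \<in> insert 0 (g ` {Y \<in> S. conf_le Y X})"
  then show "y \<le> g X"
    using assms unfolding increasing_on_def by auto
qed simp

definition lift_mean :: "real \<Rightarrow> (('v::finite \<Rightarrow> spin3) \<Rightarrow> real) \<Rightarrow> ('v \<Rightarrow> bool) \<Rightarrow> real"
  where "lift_mean \<theta> h \<sigma> = (\<Sum>X\<in>UNIV. h X * lift_prob \<theta> \<sigma> X)"

lemma lift_mean_le_fun_upd_True:
  fixes h :: "('v::finite \<Rightarrow> spin3) \<Rightarrow> real"
  assumes h: "\<And>X Y. conf_le X Y \<Longrightarrow> h X \<le> h Y" and \<theta>: "0 \<le> \<theta>" "\<theta> \<le> 1"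
    and "\<not> \<sigma> v"
  shows "lift_mean \<theta> h \<sigma> \<le> lift_mean \<theta> h (\<sigma>(v := True))"
proof -
  define R where "R X = (\<Prod>u\<in>UNIV-{v}. lift1 \<theta> (\<sigma> u) (X u))" for X
  have R_nonneg: "0 \<le> R X" for X
    unfolding R_def using \<theta> by (intro prod_nonneg) (auto intro: lift1_nonneg)
  have R_upd: "(\<Prod>u\<in>UNIV-{v}. lift1 \<theta> ((\<sigma>(v := True)) u) (X u)) = R X" for X
    unfolding R_def by (rule prod.cong) auto
  have "h (X(v := Zero)) \<le> \<theta> * h (X(v := One)) + (1 - \<theta>) * h (X(v := Star))" for X
  proof -
    have "h (X(v := Zero)) \<le> h (X(v := One))" "h (X(v := Zero)) \<le> h (X(v := Star))"
      by (simp_all add: h conf_le_fun_upd)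
    then have "\<theta> * h (X(v := Zero)) \<le> \<theta> * h (X(v := One))"
      "(1 - \<theta>) * h (X(v := Zero)) \<le> (1 - \<theta>) * h (X(v := Star))"
      using \<theta> by (simp_all add: mult_left_mono)
    then show ?thesis
      by (simp add: algebra_simps)
  qed
  then have pointwise:
    "h (X(v := Zero)) * R X \<le> (\<theta> * h (X(v := One)) + (1 - \<theta>) * h (X(v := Star))) * R X" for X
    using R_nonneg by (rule mult_right_mono)
  have lower: "(\<Sum>c\<in>UNIV. h (X(v := c)) * lift_prob \<theta> \<sigma> (X(v := c))) = h (X(v := Zero)) * R X"
    for X
    using \<open>\<not> \<sigma> v\<close> unfolding lift_prob_fun_upd R_def[symmetric] by (simp add: UNIV_spin3)
  have upper: "(\<Sum>c\<in>UNIV. h (X(v := c)) * lift_prob \<theta> (\<sigma>(v := True)) (X(v := c))) =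
      (\<theta> * h (X(v := One)) + (1 - \<theta>) * h (X(v := Star))) * R X" for X
    unfolding lift_prob_fun_upd R_upd by (simp add: UNIV_spin3 algebra_simps)
  show ?thesis
    unfolding lift_mean_def sum_fun_upd_fibres[where v=v and b=Zero]
    by (rule sum_mono) (unfold lower upper, rule pointwise)
qed

lemma lift_mean_mono:
  fixes h :: "('v::finite \<Rightarrow> spin3) \<Rightarrow> real"
  assumes h: "\<And>X Y. conf_le X Y \<Longrightarrow> h X \<le> h Y" and \<theta>: "0 \<le> \<theta>" "\<theta> \<le> 1"
    and le: "\<And>u. \<sigma> u \<Longrightarrow> \<sigma>' u"
  shows "lift_mean \<theta> h \<sigma> \<le> lift_mean \<theta> h \<sigma>'"
proof -
  have "lift_mean \<theta> h \<sigma> \<le> lift_mean \<theta> h (\<lambda>u. \<sigma> u \<or> u \<in> D)" if "finite D" for D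
    using that
  proof (induction D rule: finite_induct)
    case empty
    then show ?case
      by simp
  next
    case (insert x D)
    show ?case
    proof (cases "\<sigma> x \<or> x \<in> D")
      case True
      then have "(\<lambda>u. \<sigma> u \<or> u \<in> insert x D) = (\<lambda>u. \<sigma> u \<or> u \<in> D)"
        by auto
      then show ?thesis
        using insert.IH by simp
    next
      case False
      then have "lift_mean \<theta> h (\<lambda>u. \<sigma> u \<or> u \<in> D) \<le> lift_mean \<theta> h ((\<lambda>u. \<sigma> u \<or> u \<in> D)(x := True))"
        by (intro lift_mean_le_fun_upd_True[OF h \<theta>]) auto
      moreover have "(\<lambda>u. \<sigma> u \<or> u \<in> D)(x := True) = (\<lambda>u. \<sigma> u \<or> u \<in> insert x D)"
        by (rule ext) simp
      ultimately show ?thesis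
        using insert.IH by simp
    qed
  qed
  moreover have "\<sigma>' = (\<lambda>u. \<sigma> u \<or> u \<in> {u. \<sigma>' u})"
    using le by auto
  ultimately show ?thesis
    by (metis finite)
qed

lemma P_cl_reversible: "pi_lift \<theta> mu X * P_cl \<theta> X Y = pi_lift \<theta> mu Y * P_cl \<theta> Y X"
proof (cases "contr X = contr Y")
  case True
  then show ?thesis
    unfolding P_cl_def pi_lift_eq by simp
next
  case False
  then show ?thesis
    unfolding P_cl_def by (simp add: lift_prob_eq_0)
qed

lemma push_P_cl_eq_lift_mean:
  "push (\<lambda>X. h X * pi_lift \<theta> mu X) (P_cl \<theta>) Y = pi_lift \<theta> mu Y * lift_mean \<theta> h (contr Y)"
proof -
  have "push (\<lambda>X. h X * pi_lift \<theta> mu X) (P_cl \<theta>) Y = (\<Sum>X\<in>UNIV. h X * (pi_lift \<theta> mu Y * P_cl \<theta> Y X))"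
    unfolding push_def by (simp add: mult.assoc P_cl_reversible)
  then show ?thesis
    unfolding lift_mean_def P_cl_def by (simp add: sum_distrib_left algebra_simps)
qed

lemma has_increasing_density_eq_mono_extension:
  assumes "has_increasing_density p \<nu>" "\<And>X. 0 \<le> p X"
  shows "\<nu> X = mono_extension (Omega p) (\<lambda>X. \<nu> X / p X) X * p X"
proof (cases "X \<in> Omega p")
  case True
  then have "mono_extension (Omega p) (\<lambda>X. \<nu> X / p X) X = \<nu> X / p X"
    using assms(1) unfolding has_increasing_density_def by (blast intro: mono_extension_eq)
  then show ?thesis
    using True unfolding Omega_def by simp
next
  case False
  then have "p X = 0" "\<nu> X = 0"
    using assms unfolding has_increasing_density_def distr_on_def Omega_def
    by (auto simp: not_less order.antisym)
  then show ?thesis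
    by simp
qed

lemma has_increasing_density_push_P_cl:
  fixes mu :: "('v::finite \<Rightarrow> bool) \<Rightarrow> real"
  assumes mu: "is_distr mu" and \<theta>: "0 < \<theta>" "\<theta> < 1"
    and \<nu>: "has_increasing_density (pi_lift \<theta> mu) \<nu>"
  shows "has_increasing_density (pi_lift \<theta> mu) (push \<nu> (P_cl \<theta>))"
proof -
  define \<Omega> where "\<Omega> = Omega (pi_lift \<theta> mu)"
  define h where "h = mono_extension \<Omega> (\<lambda>X. \<nu> X / pi_lift \<theta> mu X)"
  have \<theta>': "0 \<le> \<theta>" "\<theta> \<le> 1"
    using \<theta> by simp_all
  note p_nonneg = pi_lift_nonneg[OF mu \<theta>']
  have \<nu>_eq: "\<nu> = (\<lambda>X. h X * pi_lift \<theta> mu X)"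
    unfolding h_def \<Omega>_def
    by (rule ext, rule has_increasing_density_eq_mono_extension[OF \<nu> p_nonneg])
  have push_eq: "push \<nu> (P_cl \<theta>) Y = pi_lift \<theta> mu Y * lift_mean \<theta> h (contr Y)" for Y
    unfolding \<nu>_eq by (rule push_P_cl_eq_lift_mean)
  have lift_mean_nonneg: "0 \<le> lift_mean \<theta> h \<sigma>" for \<sigma>
    unfolding lift_mean_def h_def
    by (intro sum_nonneg mult_nonneg_nonneg mono_extension_nonneg lift_prob_nonneg \<theta>')
  have h_mono: "conf_le X Y \<Longrightarrow> h X \<le> h Y" for X Y
    unfolding h_def by (rule mono_extension_mono)
  have "lift_mean \<theta> h (contr X) \<le> lift_mean \<theta> h (contr Y)" if "conf_le X Y" for X Y
    by (rule lift_mean_mono[OF h_mono \<theta>' contr_mono[OF that]])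
  then have increasing: "increasing_on \<Omega> (\<lambda>Y. push \<nu> (P_cl \<theta>) Y / pi_lift \<theta> mu Y)"
    unfolding increasing_on_def push_eq \<Omega>_def Omega_def
    by (simp add: lift_mean_nonneg)
  have push_nonneg: "0 \<le> push \<nu> (P_cl \<theta>) Y" for Y
    unfolding push_eq using p_nonneg lift_mean_nonneg by (rule mult_nonneg_nonneg)
  have push_outside: "push \<nu> (P_cl \<theta>) Y = 0" if "Y \<notin> \<Omega>" for Y
    using that p_nonneg[of Y] unfolding push_eq \<Omega>_def Omega_def by simp
  have "(\<Sum>Y\<in>\<Omega>. push \<nu> (P_cl \<theta>) Y) = 1"
  proof -
    have "(\<Sum>Y\<in>\<Omega>. push \<nu> (P_cl \<theta>) Y) = (\<Sum>Y\<in>UNIV. push \<nu> (P_cl \<theta>) Y)"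
      by (rule sum.mono_neutral_left) (auto intro: push_outside)
    also have "\<dots> = (\<Sum>X\<in>UNIV. \<nu> X)"
      unfolding push_def P_cl_def
      by (subst sum.swap) (simp add: sum_distrib_left[symmetric] sum_lift_prob)
    also have "\<dots> = (\<Sum>X\<in>\<Omega>. \<nu> X)"
      using \<nu> unfolding has_increasing_density_def distr_on_def \<Omega>_def
      by (intro sum.mono_neutral_right) auto
    also have "\<dots> = 1"
      using \<nu> unfolding has_increasing_density_def distr_on_def \<Omega>_def by simp
    finally show ?thesis .
  qed
  with push_nonneg push_outside have "distr_on \<Omega> (push \<nu> (P_cl \<theta>))"
    unfolding distr_on_def by blast
  with increasing show ?thesis
    unfolding has_increasing_density_def \<Omega>_def by simp
qed

lemma push_mprod: "push \<nu> (mprod P Q) = push (push \<nu> P) Q"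
  unfolding push_def mprod_def
  by (rule ext) (simp add: sum_distrib_left sum_distrib_right mult.assoc, rule sum.swap)

text \<open>Only the \<open>is_distr\<close> part of \<open>monotone_system mu\<close> is used: monotonicity of the conditionals
  makes both chains stochastically monotone, which \<open>mc_le\<close> does not require.\<close>
theorem lemma3p6:
  fixes mu :: "('v::finite \<Rightarrow> bool) \<Rightarrow> real" and \<theta> :: real and T2 t :: nat
  assumes "monotone_system mu"
    and "0 < \<theta>" and "\<theta> < 1"
    and "T2 \<ge> 1" and "t \<ge> 1"
  shows "mc_le (pi_lift \<theta> mu) (P_pimGD \<theta> mu T2 t) (P_alg \<theta> mu T2 t)"
proof -
  have mu: "is_distr mu"
    using assms(1) unfolding monotone_system_def by blast
  note GD_step = sd_le_push_piGD_sGD[OF mu assms(2,3)]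
  note cl_step = has_increasing_density_push_P_cl[OF mu assms(2,3)]
  have "sd_le (Omega (pi_lift \<theta> mu)) (push \<nu> (P_pimGD \<theta> mu T2 t)) (push \<nu> (P_alg \<theta> mu T2 t))"
    if "has_increasing_density (pi_lift \<theta> mu) \<nu>" for \<nu>
    using GD_step[OF that] GD_step[OF cl_step[OF that]]
    unfolding P_pimGD_def P_alg_def by (simp add: push_mprod)
  then show ?thesis
    unfolding mc_le_def has_increasing_density_def by blast
qed

end
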